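(* For Lebesgue almost every angle $\alpha\in\mathbb{T}$ the following two properties hold simultaneously: (1) for every irrational point $\xi\in\alpha+K$, one has $2\leq\mu(\xi)\leq\frac{2}{1-\kappa}$; (2) for every real number $\mu\in[2,2/(1-\kappa)]$, one has $\dim_H(\mathcal{M}(\mu)\cap(\alpha+K))\leq\frac{2}{\mu}+\kappa-1$.
   Context: $\mathbb{T}=\mathbb{R}/\mathbb{Z}$ is the circle with the usual quotient distance $d$, identified with $[0,1)$. $K$ denotes the image in $\mathbb{T}$ of the middle-third Cantor set $\{\sum_{i\ge1}a_i3^{-i}: a_i\in\{0,2\}\}$, and $\kappa=\log 2/\log 3$. For $\alpha\in\mathbb{T}$, $\alpha+K$ is the image of $K$ under the rotation by $\alpha$. Let $\mathcal{P}$ be the set of pairs $(p,q)$ of integers with $0\le p<q$ and $\gcd(p,q)=1$. For an irrational $\xi\in\mathbb{T}$, its irrationality exponent is $\mu(\xi)=\sup\{\mu\in\mathbb{R}: d(\xi,p/q)<q^{-\mu}\text{ for infinitely many }(p,q)\in\mathcal{P}\}$; for rational $\xi$, $\mu(\xi)=1$. For $\mu\ge2$, $\mathcal{M}(\mu)=\{\xi\in\mathbb{T}:\mu(\xi)\geq\mu\}$. $\dim_H$ denotes Hausdorff dimension, with the convention $\dim_H\emptyset=-\infty$. *)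

theory Defs
  imports "HOL-Analysis.Analysis"
begin

text \<open>The circle T = R/Z is represented by [0,1); tdist is the quotient distance.\<close>
definition tdist :: "real \<Rightarrow> real \<Rightarrow> real" where
  "tdist x y = \<bar>(x - y) - of_int (round (x - y))\<bar>"

definition tdiam :: "real set \<Rightarrow> real" where
  "tdiam U = (if U = {} then 0 else Sup {tdist x y | x y. x \<in> U \<and> y \<in> U})"

definition hausdorff_meas :: "real \<Rightarrow> real set \<Rightarrow> ennreal" where
  "hausdorff_meas s A =
     (SUP \<delta>\<in>{0<..}. INF U\<in>{U :: nat \<Rightarrow> real set.
          A \<subseteq> (\<Union>i. U i) \<and> (\<forall>i. tdiam (U i) \<le> \<delta>)}.
        (\<Sum>i. ennreal (tdiam (U i) powr s)))"

definition hdim :: "real set \<Rightarrow> ereal" where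
  "hdim A = (if A = {} then - \<infinity>
             else ereal (Inf {s::real. s > 0 \<and> hausdorff_meas s A = 0}))"

definition cantorK :: "real set" where
  "cantorK = {frac (\<Sum>i. real (a i) / 3 ^ Suc i) | a :: nat \<Rightarrow> nat. \<forall>i. a i \<in> {0, 2}}"

definition kappa :: real where
  "kappa = ln 2 / ln 3"

definition rot :: "real \<Rightarrow> real set \<Rightarrow> real set" where
  "rot \<alpha> S = (\<lambda>x. frac (\<alpha> + x)) ` S"

definition irr_exp :: "real \<Rightarrow> ereal" where
  "irr_exp \<xi> = (if \<xi> \<in> \<rat> then 1
     else Sup {ereal \<mu> | \<mu>. infinite {(p :: int, q :: int).
              0 \<le> p \<and> p < q \<and> coprime p q \<and>
              tdist \<xi> (of_int p / of_int q) < of_int q powr (- \<mu>)}})"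

definition Mset :: "real \<Rightarrow> real set" where
  "Mset \<mu> = {\<xi>. 0 \<le> \<xi> \<and> \<xi> < 1 \<and> irr_exp \<xi> \<ge> ereal \<mu>}"

end

theory Submission
  imports Defs "HOL-Analysis.Kronecker_Approximation_Theorem"
begin

text \<open>
  A point of \<alpha> + K lies within q^-\<mu> of p/q exactly when \<alpha> lies within q^-\<mu> of p/q - K. Covering K
  by its 2^n triadic intervals with 3^-n \<approx> q^-\<mu>, this set of angles has measure O(q^(-\<mu>(1 - \<kappa>))).
  Hence, for t + \<mu>(1 - \<kappa>) > 2, the sum over all fractions p/q of q^-t times the indicator that \<alpha>
  hits p/q has finite integral, so it is finite for almost every \<alpha>, simultaneously for all rational
  \<mu> and t. For such \<alpha>, the case t = 0 leaves only finitely many q^-\<mu>-approximations to points of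
  \<alpha> + K once \<mu> > 2/(1 - \<kappa>), which bounds the irrationality exponent; and t = \<mu>s turns the
  approximating arcs into covers of M(\<mu>) \<inter> (\<alpha> + K) with summable s-th powers of radii
  (Hausdorff-Cantelli) whenever s > 2/\<mu> + \<kappa> - 1. The lower bound 2 is Dirichlet's theorem.
\<close>

section \<open>The distance on the circle\<close>

lemma tdist_nonneg: "0 \<le> tdist x y"
  by (simp add: tdist_def)

lemma tdist_le_shift: "tdist x y \<le> \<bar>x - y - of_int k\<bar>"
proof -
  let ?t = "x - y"
  have round: "of_int (round ?t) \<le> ?t + 1/2" "?t - 1/2 < of_int (round ?t)"
    using of_int_round_le[of ?t] of_int_round_gt[of ?t] by auto
  show ?thesis
  proof (cases "k = round ?t")
    case False
    then have "k \<ge> round ?t + 1 \<or> k \<le> round ?t - 1"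
      by linarith
    then have "of_int k \<ge> of_int (round ?t) + (1::real) \<or> of_int k \<le> of_int (round ?t) - (1::real)"
      by (metis of_int_add of_int_diff of_int_le_iff of_int_1)
    then show ?thesis
      unfolding tdist_def using round by linarith
  qed (simp add: tdist_def)
qed

lemma tdist_attained: "\<exists>k::int. tdist x y = \<bar>x - y - of_int k\<bar>"
  unfolding tdist_def by blast

lemma tdist_triangle: "tdist x z \<le> tdist x y + tdist y z"
proof -
  obtain k1 k2 where "tdist x y = \<bar>x - y - of_int k1\<bar>" "tdist y z = \<bar>y - z - of_int k2\<bar>"
    using tdist_attained by metis
  moreover have "tdist x z \<le> \<bar>x - z - of_int (k1 + k2)\<bar>"
    by (rule tdist_le_shift)
  ultimately show ?thesis
    by simp
qed

lemma tdist_commute: "tdist x y = tdist y x"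
proof -
  have "tdist y x \<le> tdist x y" for x y
  proof -
    obtain k where "tdist x y = \<bar>x - y - of_int k\<bar>"
      using tdist_attained by blast
    moreover have "tdist y x \<le> \<bar>y - x - of_int (-k)\<bar>"
      by (rule tdist_le_shift)
    ultimately show ?thesis
      by simp
  qed
  then show ?thesis
    by (meson antisym)
qed

lemma tdist_le_half: "tdist x y \<le> 1/2"
  unfolding tdist_def using of_int_round_le[of "x - y"] of_int_round_gt[of "x - y"] by linarith

lemma tdist_diff_right: "tdist (x - c) (y - c) = tdist x y"
  by (simp add: tdist_def)

lemma tdist_pos_if_irrational:
  assumes "\<xi> \<notin> \<rat>" and "r \<in> \<rat>"
  shows "0 < tdist \<xi> r"
proof (rule ccontr)
  assume "\<not> 0 < tdist \<xi> r"
  then have "\<xi> = r + of_int (round (\<xi> - r))"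
    using tdist_nonneg[of \<xi> r] unfolding tdist_def by simp
  also have "\<dots> \<in> \<rat>"
    using assms(2) by (intro Rats_add Rats_of_int)
  finally show False
    using assms(1) by simp
qed

lemma tdiam_nonneg: "0 \<le> tdiam U"
proof (cases "U = {}")
  case False
  then obtain c where "c \<in> U" by blast
  then have "tdist c c \<le> Sup {tdist x y | x y. x \<in> U \<and> y \<in> U}"
    using tdist_le_half by (intro cSup_upper bdd_aboveI[of _ "1/2"]) auto
  then show ?thesis
    using False tdist_nonneg[of c c] unfolding tdiam_def by simp
qed (simp add: tdiam_def)

lemma tdiam_le:
  assumes "\<And>x y. x \<in> U \<Longrightarrow> y \<in> U \<Longrightarrow> tdist x y \<le> B" and "0 \<le> B"
  shows "tdiam U \<le> B"
proof (cases "U = {}")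
  case False
  then have "{tdist x y | x y. x \<in> U \<and> y \<in> U} \<noteq> {}"
    by blast
  then have "Sup {tdist x y | x y. x \<in> U \<and> y \<in> U} \<le> B"
    using assms(1) by (intro cSup_least) auto
  then show ?thesis
    using False unfolding tdiam_def by simp
qed (simp add: tdiam_def assms(2))

lemma tdiam_ball_le:
  assumes "0 \<le> r"
  shows "tdiam {x. tdist x c < r} \<le> 2 * r"
proof (rule tdiam_le)
  fix x y assume "x \<in> {x. tdist x c < r}" "y \<in> {x. tdist x c < r}"
  then show "tdist x y \<le> 2 * r"
    using tdist_triangle[of x y c] tdist_commute[of y c] by simp
qed (use assms in simp)

section \<open>Finite levels of the Cantor set\<close>

primrec cantor_level :: "nat \<Rightarrow> real set" where
  "cantor_level 0 = {0}"
| "cantor_level (Suc n) = cantor_level n \<union> (\<lambda>c. c + 2 / 3 ^ Suc n) ` cantor_level n"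

lemma finite_cantor_level: "finite (cantor_level n)"
  by (induction n) auto

lemma card_cantor_level_le: "card (cantor_level n) \<le> 2 ^ n"
proof (induction n)
  case (Suc n)
  have "card (cantor_level (Suc n)) \<le> card (cantor_level n) + card ((\<lambda>c. c + 2 / 3 ^ Suc n) ` cantor_level n)"
    by (simp add: card_Un_le)
  also have "\<dots> \<le> card (cantor_level n) + card (cantor_level n)"
    using card_image_le[OF finite_cantor_level] by simp
  finally show ?case
    using Suc by simp
qed simp

lemma cantor_level_bounds: "c \<in> cantor_level n \<Longrightarrow> 0 \<le> c \<and> c \<le> 1 - 1 / 3 ^ n"
proof (induction n arbitrary: c)
  case (Suc n)
  show ?case
  proof (cases "c \<in> cantor_level n")
    case True
    then show ?thesis
      using Suc.IH[of c] by (auto simp: field_simps)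
  next
    case False
    then obtain d where d: "d \<in> cantor_level n" "c = d + 2 / 3 ^ Suc n"
      using Suc.prems by auto
    have "(2::real) / 3 ^ Suc n = 2/3 * (1 / 3 ^ n)" "(1::real) / 3 ^ Suc n = 1/3 * (1 / 3 ^ n)"
      "0 < (1::real) / 3 ^ n"
      by simp_all
    then show ?thesis
      using Suc.IH[OF d(1)] d(2) by linarith
  qed
qed simp

lemma cantor_partial_sum_in_level:
  assumes "\<forall>i. a i \<in> {0, 2::nat}"
  shows "(\<Sum>i<n. real (a i) / 3 ^ Suc i) \<in> cantor_level n"
proof (induction n)
  case (Suc n)
  have "a n = 0 \<or> a n = 2"
    using assms by auto
  then show ?case
    using Suc by (auto simp: lessThan_Suc)
qed simp

lemma cantor_tail_bounds:
  assumes digits: "\<forall>i. a i \<in> {0, 2::nat}"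
  defines "f \<equiv> \<lambda>i. real (a i) / 3 ^ Suc i"
  shows "0 \<le> (\<Sum>i. f i) - (\<Sum>i<n. f i)" and "(\<Sum>i. f i) - (\<Sum>i<n. f i) \<le> 1 / 3 ^ n"
proof -
  have f_le: "f i \<le> 2 / 3 ^ Suc i" for i
  proof -
    have "real (a i) \<le> 2"
      using digits[rule_format, of i] by auto
    then show ?thesis
      unfolding f_def by (simp add: divide_right_mono)
  qed
  have geom: "(\<lambda>i. 2 / 3 ^ Suc (i + n)) sums (1 / 3 ^ n :: real)"
  proof -
    have "(\<lambda>i. (2 / 3 ^ Suc n) * (1/3::real) ^ i) sums ((2 / 3 ^ Suc n) * (1 / (1 - 1/3)))"
      by (intro sums_mult geometric_sums) simp
    then show ?thesis
      by (simp add: power_add power_one_over field_simps)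
  qed
  have "summable (\<lambda>i. (2/3) * (1/3::real) ^ i)"
    by (intro summable_mult summable_geometric) simp
  then have "summable f"
    by (rule summable_comparison_test'[where N = 0])
       (use f_le in \<open>simp add: f_def power_one_over field_simps\<close>)
  then have tail: "(\<Sum>i. f i) - (\<Sum>i<n. f i) = (\<Sum>i. f (i + n))"
    and tail_summable: "summable (\<lambda>i. f (i + n))"
    using suminf_split_initial_segment[of f n] summable_ignore_initial_segment by auto
  show "0 \<le> (\<Sum>i. f i) - (\<Sum>i<n. f i)"
    unfolding tail using tail_summable by (intro suminf_nonneg) (simp_all add: f_def)
  show "(\<Sum>i. f i) - (\<Sum>i<n. f i) \<le> 1 / 3 ^ n"
    unfolding tail using suminf_le[OF f_le tail_summable sums_summable[OF geom]] sums_unique[OF geom]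
    by simp
qed

lemma cantorK_near_level:
  assumes "x \<in> cantorK"
  obtains c k where "c \<in> cantor_level n" and "\<bar>x - c - of_int k\<bar> \<le> 1 / 3 ^ n"
proof -
  obtain a where a: "\<forall>i. a i \<in> {0, 2::nat}" and x: "x = frac (\<Sum>i. real (a i) / 3 ^ Suc i)"
    using assms unfolding cantorK_def by blast
  define S where "S = (\<Sum>i. real (a i) / 3 ^ Suc i)"
  define c where "c = (\<Sum>i<n. real (a i) / 3 ^ Suc i)"
  have "0 \<le> S - c" "S - c \<le> 1 / 3 ^ n"
    unfolding S_def c_def using cantor_tail_bounds[OF a] by auto
  then have "\<bar>x - c - of_int (- \<lfloor>S\<rfloor>)\<bar> \<le> 1 / 3 ^ n"
    using x by (simp add: S_def frac_def)
  then show ?thesis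
    using that cantor_partial_sum_in_level[OF a] unfolding c_def by blast
qed

lemma rot_cantorK_near_level:
  assumes "\<xi> \<in> rot \<alpha> cantorK" and "tdist \<xi> y < r"
  obtains c where "c \<in> cantor_level n" and "tdist \<alpha> (y - c) < r + 1 / 3 ^ n"
proof -
  obtain x where x: "x \<in> cantorK" "\<xi> = frac (\<alpha> + x)"
    using assms(1) unfolding rot_def by blast
  obtain c k where c: "c \<in> cantor_level n" "\<bar>x - c - of_int k\<bar> \<le> 1 / 3 ^ n"
    using cantorK_near_level[OF x(1)] by blast
  have "tdist \<alpha> (\<xi> - c) \<le> \<bar>\<alpha> - (\<xi> - c) - of_int (\<lfloor>\<alpha> + x\<rfloor> - k)\<bar>"
    by (rule tdist_le_shift)
  also have "\<dots> = \<bar>x - c - of_int k\<bar>"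
    using x(2) by (simp add: frac_def abs_minus_commute)
  finally have "tdist \<alpha> (\<xi> - c) \<le> 1 / 3 ^ n"
    using c(2) by simp
  then have "tdist \<alpha> (y - c) < r + 1 / 3 ^ n"
    using tdist_triangle[where x = \<alpha> and y = "\<xi> - c" and z = "y - c"] tdist_diff_right[of \<xi> c y] assms(2)
    by linarith
  with c(1) that show ?thesis
    by blast
qed

section \<open>Angles whose rotated Cantor set approximates a fraction\<close>

lemma kappa_pos: "0 < kappa" and kappa_less_1: "kappa < 1"
  unfolding kappa_def by (simp_all add: divide_pos_pos)

lemma three_powr_kappa: "(3::real) powr kappa = 2"
  unfolding kappa_def powr_def by simp

text \<open>
  \<open>3 ^ cantor_depth \<mu> q \<approx> q powr \<mu>\<close>, so this level of the Cantor set approximates \<open>K\<close> to within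
  \<open>q powr -\<mu>\<close>.
\<close>

definition cantor_depth :: "real \<Rightarrow> nat \<Rightarrow> nat" where
  "cantor_depth \<mu> q = nat \<lceil>\<mu> * log 3 (real q)\<rceil>"

definition hit_radius :: "real \<Rightarrow> nat \<Rightarrow> real" where
  "hit_radius \<mu> q = real q powr (-\<mu>) + 1 / 3 ^ cantor_depth \<mu> q"

text \<open>
  The \<open>i\<close>-th fraction is \<open>p/q\<close> with \<open>(p, q) = prod_decode i\<close>, and \<open>hit_set \<mu> i\<close> contains every
  \<open>\<alpha> \<in> [0,1)\<close> such that \<open>\<alpha> + K\<close> comes within \<open>q powr -\<mu>\<close> of \<open>p/q\<close>; the shifts
  \<open>k \<in> {-2..3}\<close> account for all integer translates that can meet \<open>[0,1)\<close>.
\<close>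

definition hit_set :: "real \<Rightarrow> nat \<Rightarrow> real set" where
  "hit_set \<mu> i = (case prod_decode i of (p, q) \<Rightarrow>
     if p < q then (\<Union>c\<in>cantor_level (cantor_depth \<mu> q). \<Union>k\<in>{-2..3::int}.
        {real p / real q - c + of_int k - hit_radius \<mu> q <..< real p / real q - c + of_int k + hit_radius \<mu> q})
     else {})"

lemma hit_set_sets [measurable]: "hit_set \<mu> i \<in> sets lborel"
  unfolding hit_set_def by (auto split: prod.split intro!: sets.finite_UN finite_cantor_level)

lemma three_pow_cantor_depth:
  assumes "1 \<le> q" "0 \<le> \<mu>"
  shows "real q powr \<mu> \<le> 3 ^ cantor_depth \<mu> q" and "3 ^ cantor_depth \<mu> q < 3 * real q powr \<mu>"
proof -
  have "0 \<le> \<mu> * log 3 (real q)"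
    using assms by simp
  then have depth: "\<mu> * log 3 (real q) \<le> real (cantor_depth \<mu> q)"
    "real (cantor_depth \<mu> q) < \<mu> * log 3 (real q) + 1"
    unfolding cantor_depth_def by linarith+
  have "(3::real) powr (\<mu> * log 3 (real q)) = (3 powr log 3 (real q)) powr \<mu>"
    by (simp add: powr_powr mult.commute)
  then have log: "(3::real) powr (\<mu> * log 3 (real q)) = real q powr \<mu>"
    using assms by simp
  have "real q powr \<mu> \<le> 3 powr real (cantor_depth \<mu> q)"
    using log depth(1) by (metis powr_mono one_le_numeral)
  then show "real q powr \<mu> \<le> 3 ^ cantor_depth \<mu> q"
    by (simp add: powr_realpow)
  have "(3::real) powr real (cantor_depth \<mu> q) < 3 powr (\<mu> * log 3 (real q) + 1)"
    using depth(2) by simp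
  then show "3 ^ cantor_depth \<mu> q < 3 * real q powr \<mu>"
    using log by (simp add: powr_add powr_realpow)
qed

lemma two_pow_cantor_depth:
  assumes "1 \<le> q" "0 \<le> \<mu>"
  shows "(2::real) ^ cantor_depth \<mu> q \<le> 2 * real q powr (\<mu> * kappa)"
proof -
  have "(2::real) ^ cantor_depth \<mu> q = (3 powr kappa) ^ cantor_depth \<mu> q"
    by (simp add: three_powr_kappa)
  also have "\<dots> = (3 ^ cantor_depth \<mu> q) powr kappa"
    by (simp add: powr_realpow[symmetric] powr_powr mult.commute)
  also have "\<dots> \<le> (3 * real q powr \<mu>) powr kappa"
    using three_pow_cantor_depth(2)[OF assms] kappa_pos by (intro powr_mono2) auto
  also have "\<dots> = 2 * real q powr (\<mu> * kappa)"
    using assms by (simp add: powr_mult three_powr_kappa powr_powr)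
  finally show ?thesis .
qed

lemma hit_radius_le:
  assumes "1 \<le> q" "0 \<le> \<mu>"
  shows "hit_radius \<mu> q \<le> 2 * real q powr (-\<mu>)"
proof -
  have "0 < real q powr \<mu>"
    using assms by simp
  then have "1 / 3 ^ cantor_depth \<mu> q \<le> real q powr (-\<mu>)"
    using three_pow_cantor_depth(1)[OF assms] by (simp add: powr_minus divide_simps)
  then show ?thesis
    unfolding hit_radius_def by simp
qed

lemma mem_hit_setI:
  assumes "\<alpha> \<in> {0..<1}" "p < q" "0 \<le> \<mu>" "c \<in> cantor_level (cantor_depth \<mu> q)"
    and close: "tdist \<alpha> (real p / real q - c) < hit_radius \<mu> q"
  shows "\<alpha> \<in> hit_set \<mu> (prod_encode (p, q))"
proof -
  obtain k where k: "tdist \<alpha> (real p / real q - c) = \<bar>\<alpha> - (real p / real q - c) - of_int k\<bar>"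
    using tdist_attained by blast
  have "1 \<le> q"
    using assms(2) by simp
  then have "real q powr (-\<mu>) \<le> 1"
    using ge_one_powr_ge_zero[of "real q" \<mu>] assms(3)
    by (metis inverse_1 le_imp_inverse_le of_nat_1 of_nat_mono powr_minus zero_less_one)
  then have "hit_radius \<mu> q \<le> 2"
    using hit_radius_le[OF \<open>1 \<le> q\<close> assms(3)] by simp
  moreover have "0 \<le> c" "c \<le> 1"
    using cantor_level_bounds[OF assms(4)] by (auto intro: order_trans[of _ "1 - _"])
  moreover have "0 \<le> real p / real q" "real p / real q < 1"
    using assms(2) by auto
  ultimately have "-3 < real_of_int k" "real_of_int k < 4"
    using k close assms(1) unfolding abs_less_iff atLeastLessThan_iff by linarith+
  then have "k \<in> {-2..3}"
    by simp
  moreover have "\<alpha> \<in> {real p / real q - c + of_int k - hit_radius \<mu> q <..< real p / real q - c + of_int k + hit_radius \<mu> q}"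
    using k close by auto
  ultimately show ?thesis
    using assms(2,4) unfolding hit_set_def by (auto intro!: bexI[of _ c] bexI[of _ k])
qed

lemma rot_cantorK_approx_imp_hit:
  assumes "\<alpha> \<in> {0..<1}" "\<xi> \<in> rot \<alpha> cantorK" "p < q" "0 \<le> \<mu>"
    and "tdist \<xi> (real p / real q) < real q powr (-\<mu>)"
  shows "\<alpha> \<in> hit_set \<mu> (prod_encode (p, q))"
proof -
  obtain c where "c \<in> cantor_level (cantor_depth \<mu> q)"
    "tdist \<alpha> (real p / real q - c) < hit_radius \<mu> q"
    using rot_cantorK_near_level[OF assms(2,5)] unfolding hit_radius_def by blast
  then show ?thesis
    by (intro mem_hit_setI assms)
qed

lemma emeasure_hit_set_le:
  assumes "prod_decode i = (p, q)" "0 \<le> \<mu>"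
  shows "emeasure lborel (hit_set \<mu> i) \<le> ennreal (48 * real q powr (-(\<mu> * (1 - kappa))))"
proof (cases "p < q")
  case True
  let ?C = "cantor_level (cantor_depth \<mu> q)" and ?K = "{-2..3::int}" and ?r = "hit_radius \<mu> q"
  let ?I = "\<lambda>c k. {real p / real q - c + of_int k - ?r <..< real p / real q - c + of_int k + ?r}"
  have q: "1 \<le> q"
    using True by simp
  have r: "0 < ?r" "?r \<le> 2 * real q powr (-\<mu>)"
    using q hit_radius_le[OF q assms(2)] by (auto simp: hit_radius_def add_pos_nonneg)
  have card: "real (card ?C) \<le> 2 * real q powr (\<mu> * kappa)"
  proof -
    have "real (card ?C) \<le> real ((2::nat) ^ cantor_depth \<mu> q)"
      by (rule of_nat_mono[OF card_cantor_level_le])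
    also have "\<dots> = 2 ^ cantor_depth \<mu> q"
      by simp
    finally show ?thesis
      using two_pow_cantor_depth[OF q assms(2)] by linarith
  qed
  have "emeasure lborel (hit_set \<mu> i) \<le> (\<Sum>c\<in>?C. \<Sum>k\<in>?K. emeasure lborel (?I c k))"
    using assms(1) True unfolding hit_set_def
    by (auto intro!: order_trans[OF emeasure_subadditive_finite] sum_mono emeasure_subadditive_finite
        finite_cantor_level)
  also have "\<dots> = ennreal (real (card ?C) * (6 * (2 * ?r)))"
    using r by (simp add: emeasure_lborel_Ioo ennreal_mult' ennreal_of_nat_eq_real_of_nat)
  also have "\<dots> \<le> ennreal ((2 * real q powr (\<mu> * kappa)) * (6 * (2 * (2 * real q powr (-\<mu>)))))"
    using card r by (intro ennreal_leI mult_mono) auto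
  also have "\<dots> = ennreal (48 * real q powr (-(\<mu> * (1 - kappa))))"
    by (simp add: powr_add[symmetric] algebra_simps)
  finally show ?thesis .
qed (use assms(1) in \<open>simp add: hit_set_def\<close>)

section \<open>Almost every angle hits few fractions\<close>

lemma AE_summable_weighted_indicator:
  fixes w :: "nat \<Rightarrow> real"
  assumes [measurable]: "\<And>i. E i \<in> sets M"
    and w: "\<And>i. 0 \<le> w i" and finite: "(\<Sum>i. ennreal (w i) * emeasure M (E i)) \<noteq> \<infinity>"
  shows "AE x in M. summable (\<lambda>i. w i * indicator (E i) x)"
proof -
  have "(\<integral>\<^sup>+ x. (\<Sum>i. ennreal (w i) * indicator (E i) x) \<partial>M) = (\<Sum>i. ennreal (w i) * emeasure M (E i))"
    by (simp add: nn_integral_suminf nn_integral_cmult_indicator)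
  then have "AE x in M. (\<Sum>i. ennreal (w i) * indicator (E i) x) \<noteq> \<infinity>"
    using finite by (intro nn_integral_PInf_AE) auto
  then show ?thesis
  proof eventually_elim
    case (elim x)
    have "(\<Sum>i. ennreal (w i * indicator (E i) x)) = (\<Sum>i. ennreal (w i) * indicator (E i) x)"
      by (intro suminf_cong) (simp split: split_indicator)
    with elim show ?case
      using w by (intro summable_suminf_not_top) auto
  qed
qed

lemma two_mult_triangle: "2 * triangle m = m * Suc m"
  by (induction m) auto

lemma Suc_prod_encode_le:
  assumes "p < q"
  shows "Suc (prod_encode (p, q)) \<le> 2 * q ^ 2"
proof -
  obtain r where r: "q = Suc r"
    using assms by (cases q) auto
  have "p \<le> r" "p + q \<le> 2 * r + 1"
    using assms r by simp_all
  then have "(p + q) * Suc (p + q) \<le> (2 * r + 1) * Suc (2 * r + 1)"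
    by (intro mult_mono) auto
  then have "2 * triangle (p + q) + 2 * p \<le> (2 * r + 1) * (2 * r + 2) + 2 * r"
    using two_mult_triangle[of "p + q"] \<open>p \<le> r\<close> by simp
  then have "2 * Suc (prod_encode (p, q)) \<le> 2 * (2 * q ^ 2)"
    unfolding prod_encode_def r by (simp add: power2_eq_square algebra_simps)
  then show ?thesis
    by simp
qed

text \<open>
  Enumerating the fractions by \<open>prod_encode\<close> costs a square in the exponent, which is where the
  threshold 2 in \<open>t + \<mu> (1 - kappa) > 2\<close> comes from.
\<close>

lemma denominator_powr_le_index:
  assumes "p < q" "0 \<le> t"
  shows "real q powr (-t) \<le> 2 powr (t/2) * real (Suc (prod_encode (p, q))) powr (-(t/2))"
proof -
  have "real (Suc (prod_encode (p, q))) \<le> real (2 * q ^ 2)"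
    by (rule of_nat_mono[OF Suc_prod_encode_le[OF assms(1)]])
  then have index: "real (Suc (prod_encode (p, q))) / 2 \<le> real q powr 2"
    using assms(1) by (simp add: powr_numeral)
  have "real q powr (-t) = (real q powr 2) powr (-(t/2))"
    by (simp only: powr_powr) simp
  also have "\<dots> \<le> (real (Suc (prod_encode (p, q))) / 2) powr (-(t/2))"
    using index assms(2) by (intro powr_mono2') auto
  also have "\<dots> = 2 powr (t/2) * real (Suc (prod_encode (p, q))) powr (-(t/2))"
    by (simp add: powr_divide powr_minus divide_simps)
  finally show ?thesis .
qed

lemma weighted_emeasure_hit_set_le:
  assumes "0 \<le> \<mu>" "0 \<le> t"
  defines "\<tau> \<equiv> t + \<mu> * (1 - kappa)"
  shows "ennreal (real (snd (prod_decode i)) powr (-t)) * emeasure lborel (hit_set \<mu> i)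
    \<le> ennreal (48 * 2 powr (\<tau>/2) * real (Suc i) powr (-(\<tau>/2)))"
proof (cases "prod_decode i")
  case (Pair p q)
  show ?thesis
  proof (cases "p < q")
    case True
    have i: "i = prod_encode (p, q)"
      using Pair by (metis prod_decode_inverse)
    have \<tau>: "0 \<le> \<tau>"
      using assms kappa_less_1 by simp
    have "ennreal (real q powr (-t)) * emeasure lborel (hit_set \<mu> i)
        \<le> ennreal (real q powr (-t)) * ennreal (48 * real q powr (-(\<mu> * (1 - kappa))))"
      by (intro mult_left_mono emeasure_hit_set_le[OF Pair assms(1)]) simp
    also have "\<dots> = ennreal (48 * real q powr (-\<tau>))"
    proof -
      have "real q powr (-t) * (48 * real q powr (-(\<mu> * (1 - kappa)))) = 48 * real q powr (-\<tau>)"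
        unfolding \<tau>_def by (simp add: powr_add[symmetric] algebra_simps)
      then show ?thesis
        by (simp add: ennreal_mult[symmetric])
    qed
    also have "\<dots> \<le> ennreal (48 * 2 powr (\<tau>/2) * real (Suc i) powr (-(\<tau>/2)))"
      using denominator_powr_le_index[OF True \<tau>] unfolding i by (intro ennreal_leI) simp
    finally show ?thesis
      using Pair by simp
  qed (use Pair in \<open>simp add: hit_set_def\<close>)
qed

lemma AE_summable_hits:
  assumes "0 \<le> \<mu>" "0 \<le> t" and exponent: "2 < t + \<mu> * (1 - kappa)"
  shows "AE \<alpha> in lborel. summable (\<lambda>i. real (snd (prod_decode i)) powr (-t) * indicator (hit_set \<mu> i) \<alpha>)"
proof (rule AE_summable_weighted_indicator)
  define \<tau> where "\<tau> = t + \<mu> * (1 - kappa)"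
  define b where "b i = 48 * 2 powr (\<tau>/2) * real (Suc i) powr (-(\<tau>/2))" for i
  have "summable (\<lambda>n. real n powr (-(\<tau>/2)))"
    using exponent by (subst summable_real_powr_iff) (simp add: \<tau>_def)
  then have "summable (\<lambda>n. real (Suc n) powr (-(\<tau>/2)))"
    by (subst summable_Suc_iff)
  then have "summable b"
    unfolding b_def by (intro summable_mult)
  have "(\<Sum>i. ennreal (real (snd (prod_decode i)) powr (-t)) * emeasure lborel (hit_set \<mu> i)) \<le> (\<Sum>i. ennreal (b i))"
    using weighted_emeasure_hit_set_le[OF assms(1,2)] unfolding b_def \<tau>_def by (intro suminf_le) simp_all
  also have "\<dots> = ennreal (\<Sum>i. b i)"
    by (rule suminf_ennreal2[OF _ \<open>summable b\<close>]) (simp add: b_def)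
  finally show "(\<Sum>i. ennreal (real (snd (prod_decode i)) powr (-t)) * emeasure lborel (hit_set \<mu> i)) \<noteq> \<infinity>"
    using top.extremum_uniqueI by fastforce
qed (use hit_set_sets in simp_all)

section \<open>Hausdorff measure and dimension\<close>

lemma hausdorff_meas_eq_0I:
  assumes "\<And>\<delta> e. 0 < \<delta> \<Longrightarrow> 0 < e \<Longrightarrow> \<exists>U. A \<subseteq> (\<Union>i. U i) \<and> (\<forall>i. tdiam (U i) \<le> \<delta>) \<and>
      (\<Sum>i. ennreal (tdiam (U i) powr s)) \<le> ennreal e"
  shows "hausdorff_meas s A = 0"
proof -
  have "(INF U\<in>{U. A \<subseteq> (\<Union>i. U i) \<and> (\<forall>i. tdiam (U i) \<le> \<delta>)}. \<Sum>i. ennreal (tdiam (U i) powr s)) \<le> 0"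
    if "0 < \<delta>" for \<delta>
  proof (rule ennreal_le_epsilon)
    fix e :: real
    assume "0 < e"
    then obtain U where U: "U \<in> {U. A \<subseteq> (\<Union>i. U i) \<and> (\<forall>i. tdiam (U i) \<le> \<delta>)}"
      and sum: "(\<Sum>i. ennreal (tdiam (U i) powr s)) \<le> ennreal e"
      using assms \<open>0 < \<delta>\<close> by blast
    show "(INF U\<in>{U. A \<subseteq> (\<Union>i. U i) \<and> (\<forall>i. tdiam (U i) \<le> \<delta>)}. \<Sum>i. ennreal (tdiam (U i) powr s))
        \<le> 0 + ennreal e"
      using INF_lower[OF U, of "\<lambda>U. \<Sum>i. ennreal (tdiam (U i) powr s)"] sum by simp
  qed
  then show ?thesis
    unfolding hausdorff_meas_def by (simp add: SUP_le_iff)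
qed

lemma LIMSEQ_zero_if_summable_powr:
  fixes r :: "nat \<Rightarrow> real"
  assumes "0 < s" "\<And>i. 0 \<le> r i" "summable (\<lambda>i. r i powr s)"
  shows "r \<longlonglongrightarrow> 0"
proof -
  have "(\<lambda>i. (r i powr s) powr (1/s)) \<longlonglongrightarrow> 0"
    by (rule tendsto_zero_powrI[OF summable_LIMSEQ_zero[OF assms(3)] tendsto_const]) (use assms in auto)
  then show ?thesis
    using assms(1,2) by (simp add: powr_powr)
qed

lemma hausdorff_cantelli:
  assumes s: "0 < s" and r: "\<And>i. 0 \<le> r i" and summable: "summable (\<lambda>i. r i powr s)"
    and frequently: "\<And>\<xi>. \<xi> \<in> A \<Longrightarrow> \<exists>\<^sub>F i in sequentially. tdist \<xi> (c i) < r i"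
  shows "hausdorff_meas s A = 0"
proof (rule hausdorff_meas_eq_0I)
  fix \<delta> e :: real
  assume "0 < \<delta>" "0 < e"
  have "r \<longlonglongrightarrow> 0"
    using LIMSEQ_zero_if_summable_powr[OF s r summable] .
  then obtain N1 where N1: "\<And>i. N1 \<le> i \<Longrightarrow> r i < \<delta> / 2"
    using \<open>0 < \<delta>\<close> order_tendstoD(2)[of r 0 sequentially "\<delta> / 2"] by (auto simp: eventually_sequentially)
  define f where "f i = 2 powr s * r i powr s" for i
  have "summable f"
    unfolding f_def by (intro summable_mult summable)
  then obtain N2 where N2: "\<And>n. N2 \<le> n \<Longrightarrow> norm (\<Sum>i. f (i + n)) < e"
    using suminf_exist_split[OF \<open>0 < e\<close>] by blast
  define N where "N = max N1 N2"
  define U where "U i = {x. tdist x (c (i + N)) < r (i + N)}" for i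
  have cover: "A \<subseteq> (\<Union>i. U i)"
  proof
    fix \<xi>
    assume "\<xi> \<in> A"
    then obtain j where "N \<le> j" "tdist \<xi> (c j) < r j"
      using frequently unfolding frequently_sequentially by blast
    then have "\<xi> \<in> U (j - N)"
      by (simp add: U_def)
    then show "\<xi> \<in> (\<Union>i. U i)"
      by blast
  qed
  have diam: "tdiam (U i) \<le> 2 * r (i + N)" for i
    unfolding U_def by (rule tdiam_ball_le[OF r])
  have small: "tdiam (U i) \<le> \<delta>" for i
    using diam[of i] N1[of "i + N"] unfolding N_def by linarith
  have sum: "(\<Sum>i. ennreal (tdiam (U i) powr s)) \<le> ennreal e"
  proof -
    have "tdiam (U i) powr s \<le> f (i + N)" for i
    proof -
      have "tdiam (U i) powr s \<le> (2 * r (i + N)) powr s"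
        using diam s tdiam_nonneg by (intro powr_mono2) auto
      then show ?thesis
        using r by (simp add: f_def powr_mult)
    qed
    then have "(\<Sum>i. ennreal (tdiam (U i) powr s)) \<le> (\<Sum>i. ennreal (f (i + N)))"
      by (intro suminf_le ennreal_leI) auto
    also have "\<dots> = ennreal (\<Sum>i. f (i + N))"
      by (rule suminf_ennreal2[OF _ summable_ignore_initial_segment[OF \<open>summable f\<close>]]) (simp add: f_def)
    also have "\<dots> \<le> ennreal e"
      using N2[of N] by (intro ennreal_leI) (simp add: N_def)
    finally show ?thesis .
  qed
  show "\<exists>U. A \<subseteq> (\<Union>i. U i) \<and> (\<forall>i. tdiam (U i) \<le> \<delta>) \<and>
      (\<Sum>i. ennreal (tdiam (U i) powr s)) \<le> ennreal e"
    using cover small sum by blast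
qed

lemma hdim_le_if_null:
  assumes "0 \<le> b" and null: "\<And>s. s \<in> \<rat> \<Longrightarrow> b < s \<Longrightarrow> hausdorff_meas s A = 0"
  shows "hdim A \<le> ereal b"
proof (cases "A = {}")
  case False
  let ?S = "{s. 0 < s \<and> hausdorff_meas s A = 0}"
  have "Inf ?S \<le> b"
  proof (rule ccontr)
    assume "\<not> Inf ?S \<le> b"
    then obtain s where s: "s \<in> \<rat>" "b < s" "s < Inf ?S"
      using Rats_dense_in_real[of b "Inf ?S"] by auto
    then have "s \<in> ?S"
      using null assms(1) by simp
    then have "Inf ?S \<le> s"
      by (intro cInf_lower bdd_belowI[of _ 0]) auto
    with s(3) show False
      by simp
  qed
  then show ?thesis
    using False unfolding hdim_def by simp
qed (simp add: hdim_def)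

section \<open>The irrationality exponent\<close>

lemma dirichlet_approx_circle:
  assumes "0 < N"
  obtains p q :: int where "0 \<le> p" "p < q" "coprime p q"
    "tdist \<xi> (of_int p / of_int q) < of_int q powr (-2)" "tdist \<xi> (of_int p / of_int q) < 1 / real N"
proof -
  obtain h k where hk: "coprime h k" "0 < k" "k \<le> int N" "\<bar>of_int k * \<xi> - of_int h\<bar> < 1 / N"
    using Dirichlet_approx_coprime[OF assms] by blast
  define p where "p = h mod k"
  have p: "0 \<le> p" "p < k" "coprime p k"
    unfolding p_def using hk(1,2) by simp_all
  have k: "1 \<le> real_of_int k" "real_of_int k \<le> real N"
    using hk(2,3) by linarith+
  have "of_int h = of_int k * of_int (h div k) + (of_int p :: real)"
    unfolding p_def by (metis div_mult_mod_eq mult.commute of_int_add of_int_mult)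
  then have "\<xi> - of_int p / of_int k - of_int (h div k) = (of_int k * \<xi> - of_int h) / of_int k"
    using k by (simp add: field_simps)
  then have "tdist \<xi> (of_int p / of_int k) \<le> \<bar>of_int k * \<xi> - of_int h\<bar> / of_int k"
    using tdist_le_shift[of \<xi> "of_int p / of_int k" "h div k"] k by simp
  also have "\<dots> < (1 / real N) / of_int k"
    using hk(4) k by (intro divide_strict_right_mono) auto
  finally have close: "tdist \<xi> (of_int p / of_int k) < (1 / real N) / of_int k" .
  have "(1 / real N) / of_int k \<le> (1 / of_int k) / of_int k"
    using k by (intro divide_right_mono) (auto simp: field_simps)
  also have "\<dots> = of_int k powr (-2)"
    using k by (simp add: powr_minus powr_numeral power2_eq_square divide_inverse)
  finally have "tdist \<xi> (of_int p / of_int k) < of_int k powr (-2)"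
    using close by linarith
  moreover have "(1 / real N) / of_int k \<le> 1 / real N"
    using k by (simp add: divide_le_eq_1 field_simps)
  ultimately show ?thesis
    using that p close by force
qed

lemma infinite_dirichlet_approx:
  assumes "\<xi> \<notin> \<rat>"
  shows "infinite {(p :: int, q :: int). 0 \<le> p \<and> p < q \<and> coprime p q \<and>
    tdist \<xi> (of_int p / of_int q) < of_int q powr (- 2)}" (is "infinite ?S")
proof
  assume fin: "finite ?S"
  let ?d = "\<lambda>(p, q). tdist \<xi> (of_int p / of_int q)"
  obtain p0 q0 :: int where "0 \<le> p0" "p0 < q0" "coprime p0 q0"
    "tdist \<xi> (of_int p0 / of_int q0) < of_int q0 powr (-2)"
    by (rule dirichlet_approx_circle[of 1 \<xi>]) simp_all
  then have "?S \<noteq> {}"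
    by blast
  define m where "m = Min (?d ` ?S)"
  have m: "0 < m"
    unfolding m_def using fin \<open>?S \<noteq> {}\<close> tdist_pos_if_irrational[OF assms] by auto
  obtain N :: nat where N: "1 / m < real N"
    using reals_Archimedean2 by blast
  have "0 < N"
    using N m by (cases N) (auto simp: field_simps)
  have "1 / real N < m"
    using N m \<open>0 < N\<close> by (simp add: field_simps)
  obtain p q :: int where "0 \<le> p" "p < q" "coprime p q"
    "tdist \<xi> (of_int p / of_int q) < of_int q powr (-2)" and close: "tdist \<xi> (of_int p / of_int q) < 1 / real N"
    by (rule dirichlet_approx_circle[OF \<open>0 < N\<close>])
  then have "(p, q) \<in> ?S"
    by simp
  then have "m \<le> tdist \<xi> (of_int p / of_int q)"
    unfolding m_def using fin by (metis (no_types, lifting) Min_le case_prod_conv finite_imageI image_eqI)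
  with close \<open>1 / real N < m\<close> show False
    by simp
qed

lemma irr_exp_ge_2:
  assumes "\<xi> \<notin> \<rat>"
  shows "ereal 2 \<le> irr_exp \<xi>"
  using infinite_dirichlet_approx[OF assms] assms unfolding irr_exp_def by (auto intro: Sup_upper)

lemma irr_exp_gt_imp_approx:
  assumes "\<xi> \<notin> \<rat>" "ereal \<mu> < irr_exp \<xi>"
  obtains p q :: nat where "p < q" "Q \<le> q" "tdist \<xi> (real p / real q) < real q powr (-\<mu>)"
proof -
  obtain \<mu>' where "\<mu> < \<mu>'" and inf: "infinite {(p :: int, q :: int). 0 \<le> p \<and> p < q \<and> coprime p q \<and>
      tdist \<xi> (of_int p / of_int q) < of_int q powr (- \<mu>')}" (is "infinite ?S")
    using assms unfolding irr_exp_def by (auto simp: less_Sup_iff)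
  have "\<not> ?S \<subseteq> {0..int Q} \<times> {0..int Q}"
    using inf finite_subset by blast
  then obtain p q where pq: "0 \<le> p" "p < q" "int Q \<le> q" "tdist \<xi> (of_int p / of_int q) < of_int q powr (- \<mu>')"
    by fastforce
  have "(of_int q :: real) powr (- \<mu>') \<le> of_int q powr (- \<mu>)"
    using \<open>\<mu> < \<mu>'\<close> pq by (intro powr_mono) auto
  then have "tdist \<xi> (real (nat p) / real (nat q)) < real (nat q) powr (-\<mu>)"
    using pq by simp
  moreover have "nat p < nat q" "Q \<le> nat q"
    using pq by auto
  ultimately show ?thesis
    using that by blast
qed

section \<open>Almost every rotation\<close>

lemma mem_hit_setD: "\<alpha> \<in> hit_set \<mu> i \<Longrightarrow> fst (prod_decode i) < snd (prod_decode i)"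
  unfolding hit_set_def by (auto split: prod.splits if_splits)

lemma frequently_hit:
  assumes "\<alpha> \<in> {0..<1}" "\<xi> \<in> rot \<alpha> cantorK" "\<xi> \<notin> \<rat>" "0 \<le> \<mu>" "ereal \<mu> < irr_exp \<xi>"
  shows "\<exists>\<^sub>F i in sequentially. \<alpha> \<in> hit_set \<mu> i \<and>
    tdist \<xi> (real (fst (prod_decode i)) / real (snd (prod_decode i))) < real (snd (prod_decode i)) powr (-\<mu>)"
  unfolding frequently_sequentially
proof
  fix N
  obtain p q :: nat where pq: "p < q" "N \<le> q" "tdist \<xi> (real p / real q) < real q powr (-\<mu>)"
    using irr_exp_gt_imp_approx[OF assms(3,5)] by blast
  moreover have "N \<le> prod_encode (p, q)"
    using pq(2) le_prod_encode_2[of q p] by linarith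
  moreover have "\<alpha> \<in> hit_set \<mu> (prod_encode (p, q))"
    using rot_cantorK_approx_imp_hit[OF assms(1,2) pq(1) assms(4) pq(3)] .
  ultimately show "\<exists>i\<ge>N. \<alpha> \<in> hit_set \<mu> i \<and>
      tdist \<xi> (real (fst (prod_decode i)) / real (snd (prod_decode i))) < real (snd (prod_decode i)) powr (-\<mu>)"
    by (intro exI[of _ "prod_encode (p, q)"]) simp
qed

definition good_angle :: "real \<Rightarrow> bool" where
  "good_angle \<alpha> \<longleftrightarrow> (\<forall>\<mu>\<in>\<rat>. \<forall>t\<in>\<rat>. 0 \<le> \<mu> \<and> 0 \<le> t \<and> 2 < t + \<mu> * (1 - kappa) \<longrightarrow>
     summable (\<lambda>i. real (snd (prod_decode i)) powr (-t) * indicator (hit_set \<mu> i) \<alpha>))"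

lemma AE_good_angle: "AE \<alpha> in lborel. good_angle \<alpha>"
proof -
  have "AE \<alpha> in lborel. 0 \<le> \<mu> \<and> 0 \<le> t \<and> 2 < t + \<mu> * (1 - kappa) \<longrightarrow>
      summable (\<lambda>i. real (snd (prod_decode i)) powr (-t) * indicator (hit_set \<mu> i) \<alpha>)" for \<mu> t
    using AE_summable_hits[of \<mu> t] by (cases "0 \<le> \<mu> \<and> 0 \<le> t \<and> 2 < t + \<mu> * (1 - kappa)") auto
  then show ?thesis
    unfolding good_angle_def by (simp add: AE_ball_countable countable_rat)
qed

lemma irr_exp_le_if_good_angle:
  assumes "good_angle \<alpha>" "\<alpha> \<in> {0..<1}" "\<xi> \<in> rot \<alpha> cantorK" "\<xi> \<notin> \<rat>"
  shows "irr_exp \<xi> \<le> ereal (2 / (1 - kappa))"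
proof (rule ccontr)
  assume "\<not> ?thesis"
  then obtain z where z: "2 / (1 - kappa) < z" "ereal z < irr_exp \<xi>"
    using ereal_dense2 by (metis less_ereal.simps(1) not_le)
  then obtain \<mu> where \<mu>: "\<mu> \<in> \<rat>" "2 / (1 - kappa) < \<mu>" "\<mu> < z"
    using Rats_dense_in_real by blast
  have "0 < 1 - kappa"
    using kappa_less_1 by simp
  then have "0 < \<mu>"
    using \<mu>(2) divide_pos_pos[of 2 "1 - kappa"] by linarith
  have "2 < 0 + \<mu> * (1 - kappa)"
    using \<mu>(2) \<open>0 < 1 - kappa\<close> by (simp add: divide_less_eq)
  have "summable (\<lambda>i. real (snd (prod_decode i)) powr (-0) * indicator (hit_set \<mu> i) \<alpha>)"
    using assms(1) \<mu>(1) Rats_0 \<open>0 < \<mu>\<close> \<open>2 < 0 + \<mu> * (1 - kappa)\<close>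
    unfolding good_angle_def by (meson less_imp_le order_refl)
  then have "\<forall>\<^sub>F i in sequentially. real (snd (prod_decode i)) powr (-0) * indicator (hit_set \<mu> i) \<alpha> < 1"
    by (intro order_tendstoD(2)[OF summable_LIMSEQ_zero]) simp_all
  then have "\<forall>\<^sub>F i in sequentially. \<alpha> \<notin> hit_set \<mu> i"
  proof eventually_elim
    case (elim i)
    then show ?case
      using mem_hit_setD[of \<alpha> \<mu> i] by (auto split: if_splits)
  qed
  moreover have "ereal \<mu> < irr_exp \<xi>"
    using \<mu>(3) z(2) by (metis less_ereal.simps(1) less_trans)
  then have "\<exists>\<^sub>F i in sequentially. \<alpha> \<in> hit_set \<mu> i"
    using frequently_hit[OF assms(2-4), of \<mu>] \<open>0 < \<mu>\<close> by (auto elim: frequently_elim1)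
  ultimately show False
    using frequently_eventually_conj by fastforce
qed

lemma hausdorff_meas_eq_0_if_good_angle:
  assumes "good_angle \<alpha>" "\<alpha> \<in> {0..<1}" "m \<in> \<rat>" "s \<in> \<rat>" "0 < m" "0 < s"
    and exponent: "2 < m * (s + 1 - kappa)"
    and A: "\<And>\<xi>. \<xi> \<in> A \<Longrightarrow> \<xi> \<in> rot \<alpha> cantorK \<and> \<xi> \<notin> \<rat> \<and> ereal m < irr_exp \<xi>"
  shows "hausdorff_meas s A = 0"
proof -
  define r where "r i = real (snd (prod_decode i)) powr (-m) * indicator (hit_set m i) \<alpha>" for i
  show ?thesis
  proof (rule hausdorff_cantelli)
    show "0 < s" "0 \<le> r i" for i
      using assms(6) by (simp_all add: r_def)
    have "summable (\<lambda>i. real (snd (prod_decode i)) powr (-(m * s)) * indicator (hit_set m i) \<alpha>)"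
      using assms(1,3-6) exponent unfolding good_angle_def by (simp add: Rats_mult algebra_simps)
    then show "summable (\<lambda>i. r i powr s)"
      by (rule summable_cong[THEN iffD1, rotated])
         (simp add: r_def powr_powr \<open>0 < s\<close> split: split_indicator)
    fix \<xi>
    assume "\<xi> \<in> A"
    then show "\<exists>\<^sub>F i in sequentially.
        tdist \<xi> (real (fst (prod_decode i)) / real (snd (prod_decode i))) < r i"
      using frequently_hit[OF assms(2), of \<xi> m] A \<open>0 < m\<close>
      by (auto simp: r_def elim!: frequently_elim1)
  qed
qed

lemma not_rational_if_in_Mset: "\<xi> \<in> Mset \<mu> \<Longrightarrow> 1 < \<mu> \<Longrightarrow> \<xi> \<notin> \<rat>"
  unfolding Mset_def irr_exp_def by auto

lemma hdim_le_if_good_angle: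
  assumes "good_angle \<alpha>" "\<alpha> \<in> {0..<1}" "2 \<le> \<mu>" "\<mu> \<le> 2 / (1 - kappa)"
  shows "hdim (Mset \<mu> \<inter> rot \<alpha> cantorK) \<le> ereal (2 / \<mu> + kappa - 1)"
proof (rule hdim_le_if_null)
  have "0 < 1 - kappa"
    using kappa_less_1 by simp
  then show "0 \<le> 2 / \<mu> + kappa - 1"
    using assms(3,4) by (simp add: le_divide_eq field_simps)
  fix s
  assume s: "s \<in> \<rat>" "2 / \<mu> + kappa - 1 < s"
  have "0 < s + 1 - kappa"
    using \<open>0 < 1 - kappa\<close> \<open>0 \<le> 2 / \<mu> + kappa - 1\<close> s(2) by linarith
  moreover have "2 < \<mu> * (s + 1 - kappa)"
    using s(2) assms(3) by (simp add: field_simps)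
  ultimately obtain m where m: "m \<in> \<rat>" "2 / (s + 1 - kappa) < m" "m < \<mu>"
    using Rats_dense_in_real[of "2 / (s + 1 - kappa)" \<mu>] by (auto simp: divide_less_eq mult.commute)
  show "hausdorff_meas s (Mset \<mu> \<inter> rot \<alpha> cantorK) = 0"
  proof (rule hausdorff_meas_eq_0_if_good_angle[OF assms(1,2) m(1) s(1)])
    show "0 < m"
      using m(2) \<open>0 < s + 1 - kappa\<close> divide_pos_pos[of 2 "s + 1 - kappa"] by linarith
    show "0 < s"
      using s(2) \<open>0 \<le> 2 / \<mu> + kappa - 1\<close> by linarith
    show "2 < m * (s + 1 - kappa)"
      using m(2) \<open>0 < s + 1 - kappa\<close> by (simp add: divide_less_eq)
    fix \<xi>
    assume \<xi>: "\<xi> \<in> Mset \<mu> \<inter> rot \<alpha> cantorK"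
    then have "ereal m < irr_exp \<xi>"
      using m(3) unfolding Mset_def by (auto intro: less_le_trans[of _ "ereal \<mu>"])
    then show "\<xi> \<in> rot \<alpha> cantorK \<and> \<xi> \<notin> \<rat> \<and> ereal m < irr_exp \<xi>"
      using \<xi> not_rational_if_in_Mset[of \<xi> \<mu>] assms(3) by auto
  qed
qed

theorem theorem2p1:
  shows "AE \<alpha> in lborel. \<alpha> \<in> {0..<1} \<longrightarrow>
     ((\<forall>\<xi>\<in>rot \<alpha> cantorK. \<xi> \<notin> \<rat> \<longrightarrow>
         ereal 2 \<le> irr_exp \<xi> \<and> irr_exp \<xi> \<le> ereal (2 / (1 - kappa))) \<and>
      (\<forall>\<mu>::real. 2 \<le> \<mu> \<and> \<mu> \<le> 2 / (1 - kappa) \<longrightarrow>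
         hdim (Mset \<mu> \<inter> rot \<alpha> cantorK) \<le> ereal (2 / \<mu> + kappa - 1)))"
  using AE_good_angle
proof eventually_elim
  case (elim \<alpha>)
  then show ?case
    using irr_exp_ge_2 irr_exp_le_if_good_angle hdim_le_if_good_angle by blast
qed

end
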